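(* Let $G=(V,E)$ be a graph and $\Theta:E\to[0,\pi/2]$. Suppose that $P$ is a disk pattern in $\mathbb{C}$ which realizes $(G,\Theta)$. Then for any $r_2>r_1>0$, $$\mathrm{VEL}(V_{c(r_1)},V_{c(r_2)})\ge\frac{(r_2-r_1)^2}{(32+(8\pi)^2)\,r_2^2}.$$ In particular, if $r_2\ge2r_1$, then $\mathrm{VEL}(V_{c(r_1)},V_{c(r_2)})\ge\frac{1}{128+(16\pi)^2}$.
   Context: $c(r)$ is the circle of radius $r$ centered at $0$, and $V_{c}=V_c(P)=\{v\in V: P(v)\cap c\ne\emptyset\}$. A disk pattern in $\mathbb{C}$ is a collection of closed round disks in $\mathbb{C}$ in which no disk has its boundary contained in the union of two other disks and no disk is the Hausdorff limit of a sequence of distinct disks. Its contact graph has one vertex per disk, with an edge when the disks intersect. The dihedral angle of two intersecting disks $D_1,D_2$ is the angle in $[0,\pi)$ between the clockwise tangent of $\partial D_1$ and the counterclockwise tangent of $\partial D_2$ at a point of $\partial D_1\cap\partial D_2$. Let $\tilde G$ be obtained from $G$ by adding the edge $[v_1,v_3]$ (if not present) whenever $v_0,v_1,v_2,v_3$ form a simple loop with $\Theta([v_{i-1},v_i])=\pi/2$, $i=1,\dots,4$ ($v_4=v_0$), and $\Theta([v_0,v_2])=0$; $\tilde\Theta=\Theta$ on $E$ and $0$ on added edges. $P=\{P(v)\}_{v\in V}$ realizes $(G,\Theta)$ if its contact graph is (via $v\mapsto P(v)$) isomorphic to $\tilde G$ with dihedral angles $\tilde\Theta$. Vertex extremal length: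 a vertex metric is $\eta:V\to[0,\infty)$ with area $\sum_v\eta(v)^2$; a vertex curve $\gamma\subseteq V$ has length $\sum_{v\in\gamma}\eta(v)$. For a family $\Gamma$ of vertex curves, $\eta$ is admissible if every $\gamma\in\Gamma$ has length $\ge1$; $\mathrm{MOD}(\Gamma)$ is the infimum of areas of admissible metrics and $\mathrm{VEL}(\Gamma)=1/\mathrm{MOD}(\Gamma)$ ($+\infty$ if $\Gamma$ is empty). A path in $G$ is a sequence of vertices with consecutive ones adjacent in $G$, identified with its vertex set. For nonvoid $V_1,V_2\subseteq V$, $\mathrm{VEL}(V_1,V_2)$ is the VEL of the family of paths in $G$ joining $V_1$ and $V_2$ (if $V_1$ or $V_2$ is empty the family is empty and the VEL is $+\infty$). *)

theory Defs
  imports "HOL-Analysis.Analysis"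
begin

definition graph :: "'v set \<Rightarrow> 'v set set \<Rightarrow> bool" where
  "graph V E \<longleftrightarrow> (\<forall>e\<in>E. \<exists>u v. u \<in> V \<and> v \<in> V \<and> u \<noteq> v \<and> e = {u, v})"

definition added_edges :: "'v set \<Rightarrow> 'v set set \<Rightarrow> ('v set \<Rightarrow> real) \<Rightarrow> 'v set set" where
  "added_edges V E \<Theta> = {{v1, v3} | v0 v1 v2 v3.
      v0 \<in> V \<and> v1 \<in> V \<and> v2 \<in> V \<and> v3 \<in> V \<and> distinct [v0, v1, v2, v3] \<and>
      {v0, v1} \<in> E \<and> {v1, v2} \<in> E \<and> {v2, v3} \<in> E \<and> {v3, v0} \<in> E \<and>
      \<Theta> {v0, v1} = pi / 2 \<and> \<Theta> {v1, v2} = pi / 2 \<and> \<Theta> {v2, v3} = pi / 2 \<and>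
      \<Theta> {v3, v0} = pi / 2 \<and> {v0, v2} \<in> E \<and> \<Theta> {v0, v2} = 0}"

definition tilde_E :: "'v set \<Rightarrow> 'v set set \<Rightarrow> ('v set \<Rightarrow> real) \<Rightarrow> 'v set set" where
  "tilde_E V E \<Theta> = E \<union> added_edges V E \<Theta>"

definition tilde_Theta :: "'v set set \<Rightarrow> ('v set \<Rightarrow> real) \<Rightarrow> 'v set \<Rightarrow> real" where
  "tilde_Theta E \<Theta> e = (if e \<in> E then \<Theta> e else 0)"

definition round_disk :: "complex set \<Rightarrow> bool" where
  "round_disk D \<longleftrightarrow> (\<exists>c r. r > 0 \<and> D = cball c r)"

definition hausdorff_dist :: "complex set \<Rightarrow> complex set \<Rightarrow> real" where
  "hausdorff_dist A B = max (SUP a\<in>A. infdist a B) (SUP b\<in>B. infdist b A)"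

definition disk_pattern :: "complex set set \<Rightarrow> bool" where
  "disk_pattern \<P> \<longleftrightarrow>
     (\<forall>D\<in>\<P>. round_disk D) \<and>
     (\<forall>D\<in>\<P>. \<forall>D1\<in>\<P> - {D}. \<forall>D2\<in>\<P> - {D}. \<not> frontier D \<subseteq> D1 \<union> D2) \<and>
     (\<forall>D\<in>\<P>. \<not> (\<exists>Ds :: nat \<Rightarrow> complex set. inj Ds \<and> range Ds \<subseteq> \<P> \<and>
                   (\<lambda>n. hausdorff_dist (Ds n) D) \<longlonglongrightarrow> 0))"

definition disk :: "complex \<times> real \<Rightarrow> complex set" where
  "disk cr = cball (fst cr) (snd cr)"

definition vec_angle :: "complex \<Rightarrow> complex \<Rightarrow> real" where
  "vec_angle u w = arccos ((u \<bullet> w) / (norm u * norm w))"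

text \<open>Dihedral angle of disks D1 = disk (c1,r1), D2 = disk (c2,r2): the angle between the
  clockwise tangent of the boundary of D1 and the counterclockwise tangent of the boundary of
  D2 at a point p of the intersection of the boundaries.  The clockwise tangent of the circle
  centered at c1 at p is the direction -i(p-c1), the counterclockwise one of the circle
  centered at c2 is i(p-c2).\<close>
definition dihedral_angle :: "complex \<times> real \<Rightarrow> complex \<times> real \<Rightarrow> real" where
  "dihedral_angle P1 P2 =
     (let p = (SOME p. p \<in> sphere (fst P1) (snd P1) \<inter> sphere (fst P2) (snd P2))
      in vec_angle (- \<i> * (p - fst P1)) (\<i> * (p - fst P2)))"

definition realizes :: "'v set \<Rightarrow> 'v set set \<Rightarrow> ('v set \<Rightarrow> real) \<Rightarrow> ('v \<Rightarrow> complex \<times> real) \<Rightarrow> bool" where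
  "realizes V E \<Theta> P \<longleftrightarrow>
     (\<forall>v\<in>V. snd (P v) > 0) \<and>
     inj_on (\<lambda>v. disk (P v)) V \<and>
     disk_pattern ((\<lambda>v. disk (P v)) ` V) \<and>
     (\<forall>u\<in>V. \<forall>v\<in>V. u \<noteq> v \<longrightarrow>
        ((disk (P u) \<inter> disk (P v) \<noteq> {}) \<longleftrightarrow> {u, v} \<in> tilde_E V E \<Theta>)) \<and>
     (\<forall>u\<in>V. \<forall>v\<in>V. u \<noteq> v \<longrightarrow> {u, v} \<in> tilde_E V E \<Theta> \<longrightarrow>
        sphere (fst (P u)) (snd (P u)) \<inter> sphere (fst (P v)) (snd (P v)) \<noteq> {} \<and>
        dihedral_angle (P u) (P v) = tilde_Theta E \<Theta> {u, v})"

definition V_circ :: "'v set \<Rightarrow> ('v \<Rightarrow> complex \<times> real) \<Rightarrow> real \<Rightarrow> 'v set" where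
  "V_circ V P r = {v \<in> V. disk (P v) \<inter> sphere 0 r \<noteq> {}}"

definition vm_area :: "'v set \<Rightarrow> ('v \<Rightarrow> real) \<Rightarrow> ennreal" where
  "vm_area V \<eta> = (\<Sum>\<^sub>\<infinity>v\<in>V. ennreal ((\<eta> v)\<^sup>2))"

definition vm_length :: "('v \<Rightarrow> real) \<Rightarrow> 'v set \<Rightarrow> ennreal" where
  "vm_length \<eta> \<gamma> = (\<Sum>\<^sub>\<infinity>v\<in>\<gamma>. ennreal (\<eta> v))"

definition MOD :: "'v set \<Rightarrow> 'v set set \<Rightarrow> ennreal" where
  "MOD V \<Gamma> = (INF \<eta>\<in>{\<eta>. (\<forall>v\<in>V. \<eta> v \<ge> 0) \<and> (\<forall>\<gamma>\<in>\<Gamma>. vm_length \<eta> \<gamma> \<ge> 1)}. vm_area V \<eta>)"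

text \<open>VEL = 1/MOD (inverse 0 = top in ennreal; empty family gives MOD = 0, VEL = top).\<close>
definition VEL :: "'v set \<Rightarrow> 'v set set \<Rightarrow> ennreal" where
  "VEL V \<Gamma> = inverse (MOD V \<Gamma>)"

definition joining_paths :: "'v set \<Rightarrow> 'v set set \<Rightarrow> 'v set \<Rightarrow> 'v set \<Rightarrow> 'v set set" where
  "joining_paths V E V1 V2 = {set xs | xs. xs \<noteq> [] \<and> set xs \<subseteq> V \<and>
       (\<forall>i. Suc i < length xs \<longrightarrow> {xs ! i, xs ! Suc i} \<in> E) \<and>
       hd xs \<in> V1 \<and> last xs \<in> V2}"

definition VEL_sets :: "'v set \<Rightarrow> 'v set set \<Rightarrow> 'v set \<Rightarrow> 'v set \<Rightarrow> ennreal" where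
  "VEL_sets V E V1 V2 = VEL V (joining_paths V E V1 V2)"

end

theory Submission
  imports Defs
begin

(* Let eta(v) = min 1 (2 rho_v / (r2 - r1)) on the vertices whose disk meets the closed annulus
   r1 <= |z| <= r2, and eta(v) = 0 elsewhere.  Along a path joining the two circles the disks form a
   connected set whose moduli cover [r1, r2], so their diameters add up to at least r2 - r1 and
   eta is admissible.  Intersecting disks meet at dihedral angle at most pi/2, hence their radii
   and centres satisfy rho_u^2 + rho_v^2 <= |c_u - c_v|^2; seen from a common point x the vectors
   c_v - x are then pairwise non-acute, so x lies in at most four disks.  Shrinking each annulus
   disk to radius min rho_v ((r2 - r1)/2) keeps it inside |z| <= 2 r2, and comparing areas gives
   sum eta^2 <= 64 r2^2 / (r2 - r1)^2.  Hence VEL >= (r2 - r1)^2 / (64 r2^2), which gives both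
   bounds because 64 <= 32 + (8 pi)^2 and, when r2 >= 2 r1, r2 - r1 >= r2 / 2. *)

lemma inner_nonneg_if_vec_angle_le_pi_half:
  fixes u w :: complex
  assumes "vec_angle u w \<le> pi / 2"
  shows "0 \<le> u \<bullet> w"
proof (rule ccontr)
  assume neg: "\<not> 0 \<le> u \<bullet> w"
  then have "u \<noteq> 0" "w \<noteq> 0" by auto
  then have "0 < norm u * norm w" by simp
  moreover define X where "X = u \<bullet> w / (norm u * norm w)"
  ultimately have "-1 \<le> X" "X < 0"
    using Cauchy_Schwarz_ineq2[of u w] neg by (auto simp: field_simps)
  then have "arccos 0 < arccos X" by (intro arccos_less_arccos) auto
  then show False using assms by (simp add: vec_angle_def X_def)
qed

lemma sq_radii_le_sq_dist_if_dihedral_angle_le_pi_half: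
  assumes "sphere (fst A) (snd A) \<inter> sphere (fst B) (snd B) \<noteq> {}"
    and "dihedral_angle A B \<le> pi / 2"
  shows "(snd A)\<^sup>2 + (snd B)\<^sup>2 \<le> (dist (fst A) (fst B))\<^sup>2"
proof -
  define p where "p = (SOME p. p \<in> sphere (fst A) (snd A) \<inter> sphere (fst B) (snd B))"
  have p: "p \<in> sphere (fst A) (snd A) \<inter> sphere (fst B) (snd B)"
    unfolding p_def using assms(1) by (metis ex_in_conv someI_ex)
  define a b where "a = p - fst A" and "b = p - fst B"
  have "0 \<le> (- \<i> * a) \<bullet> (\<i> * b)"
    using assms(2) unfolding dihedral_angle_def Let_def p_def[symmetric] a_def b_def
    by (intro inner_nonneg_if_vec_angle_le_pi_half) simp
  then have "a \<bullet> b \<le> 0" by (simp add: inner_complex_def)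
  moreover have "norm a = snd A" "norm b = snd B"
    using p by (auto simp: a_def b_def dist_norm norm_minus_commute)
  moreover have "(dist (fst A) (fst B))\<^sup>2 = (norm a)\<^sup>2 + (norm b)\<^sup>2 - 2 * (a \<bullet> b)"
    by (simp add: a_def b_def dist_norm norm_minus_commute power2_norm_eq_inner
        inner_diff_left inner_diff_right inner_commute)
  ultimately show ?thesis by simp
qed

lemma realizes_radius_pos: "realizes V E \<Theta> P \<Longrightarrow> v \<in> V \<Longrightarrow> 0 < snd (P v)"
  by (simp add: realizes_def)

lemma realizes_sq_radii_le_sq_dist:
  assumes "\<forall>e\<in>E. \<Theta> e \<le> pi / 2" and R: "realizes V E \<Theta> P"
    and uv: "u \<in> V" "v \<in> V" "u \<noteq> v" "disk (P u) \<inter> disk (P v) \<noteq> {}"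
  shows "(snd (P u))\<^sup>2 + (snd (P v))\<^sup>2 \<le> (dist (fst (P u)) (fst (P v)))\<^sup>2"
proof (rule sq_radii_le_sq_dist_if_dihedral_angle_le_pi_half)
  have "{u, v} \<in> tilde_E V E \<Theta>" using R uv unfolding realizes_def by blast
  then show "sphere (fst (P u)) (snd (P u)) \<inter> sphere (fst (P v)) (snd (P v)) \<noteq> {}"
    and "dihedral_angle (P u) (P v) \<le> pi / 2"
    using R uv(1-3) assms(1) unfolding realizes_def tilde_Theta_def by auto
qed

fun quadrant :: "complex \<Rightarrow> nat" where
  "quadrant z = (if Re z > 0 \<and> Im z \<ge> 0 then 0 else if Re z \<le> 0 \<and> Im z > 0 then 1
     else if Re z < 0 \<and> Im z \<le> 0 then 2 else 3)"

lemma inner_pos_if_same_quadrant: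
  assumes "a \<noteq> 0" "b \<noteq> 0" "quadrant a = quadrant b"
  shows "0 < a \<bullet> b"
proof -
  have "Re a \<noteq> 0 \<or> Im a \<noteq> 0" "Re b \<noteq> 0 \<or> Im b \<noteq> 0"
    using assms(1,2) complex_eqI by auto
  with assms(3) consider
      "0 < Re a \<and> 0 \<le> Im a \<and> 0 < Re b \<and> 0 \<le> Im b"
    | "Re a \<le> 0 \<and> 0 < Im a \<and> Re b \<le> 0 \<and> 0 < Im b"
    | "Re a < 0 \<and> Im a \<le> 0 \<and> Re b < 0 \<and> Im b \<le> 0"
    | "0 \<le> Re a \<and> Im a < 0 \<and> 0 \<le> Re b \<and> Im b < 0"
    by (simp split: if_splits) linarith+
  then show ?thesis
    unfolding inner_complex_def
    by cases (auto intro: add_pos_nonneg add_nonneg_pos mult_pos_pos mult_nonneg_nonneg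
        mult_neg_neg mult_nonpos_nonpos)
qed

lemma card_le_4_if_pairwise_inner_nonpos:
  fixes f :: "'a \<Rightarrow> complex"
  assumes "\<forall>u\<in>A. \<forall>v\<in>A. u \<noteq> v \<longrightarrow> f u \<noteq> 0 \<and> f u \<bullet> f v \<le> 0"
  shows "card A \<le> 4"
proof -
  have "inj_on (quadrant \<circ> f) A"
  proof (rule inj_onI, rule ccontr)
    fix u v assume "u \<in> A" "v \<in> A" "(quadrant \<circ> f) u = (quadrant \<circ> f) v" "u \<noteq> v"
    then show False
      using assms inner_pos_if_same_quadrant[of "f u" "f v"] by fastforce
  qed
  moreover have "(quadrant \<circ> f) ` A \<subseteq> {..<4}" by auto
  ultimately have "card A \<le> card {..<4::nat}" by (intro card_inj_on_le) auto
  then show ?thesis by simp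
qed

lemma card_le_4_if_common_point:
  fixes c :: "'a \<Rightarrow> complex"
  assumes "\<forall>v\<in>A. 0 < \<rho> v \<and> x \<in> cball (c v) (\<rho> v)"
    and "\<forall>u\<in>A. \<forall>v\<in>A. u \<noteq> v \<longrightarrow> (\<rho> u)\<^sup>2 + (\<rho> v)\<^sup>2 \<le> (dist (c u) (c v))\<^sup>2"
  shows "card A \<le> 4"
proof (rule card_le_4_if_pairwise_inner_nonpos[of A "\<lambda>v. c v - x"], intro ballI impI)
  fix u v assume uv: "u \<in> A" "v \<in> A" "u \<noteq> v"
  define a b where "a = c u - x" and "b = c v - x"
  have "norm a \<le> \<rho> u" "norm b \<le> \<rho> v" and "0 < \<rho> u"
    using assms(1) uv by (auto simp: a_def b_def dist_norm norm_minus_commute)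
  then have a: "(norm a)\<^sup>2 \<le> (\<rho> u)\<^sup>2" "0 < (\<rho> u)\<^sup>2" and b: "(norm b)\<^sup>2 \<le> (\<rho> v)\<^sup>2"
    by (auto intro: power_mono)
  have "(\<rho> u)\<^sup>2 + (\<rho> v)\<^sup>2 \<le> (norm a)\<^sup>2 + (norm b)\<^sup>2 - 2 * (a \<bullet> b)"
    using assms(2)[rule_format, OF uv] by (simp add: a_def b_def dist_norm power2_norm_eq_inner
        inner_diff_left inner_diff_right inner_commute)
  then have "2 * (a \<bullet> b) \<le> (norm a)\<^sup>2 - (\<rho> u)\<^sup>2" using b by linarith
  then show "a \<noteq> 0 \<and> a \<bullet> b \<le> 0" using a by auto
qed

lemma realizes_card_disks_containing_le_4:
  assumes "\<forall>e\<in>E. \<Theta> e \<le> pi / 2" and R: "realizes V E \<Theta> P" and "F \<subseteq> V"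
  shows "card {v\<in>F. x \<in> disk (P v)} \<le> 4"
proof (rule card_le_4_if_common_point[where c = "\<lambda>v. fst (P v)" and \<rho> = "\<lambda>v. snd (P v)"];
    intro ballI impI)
  fix u v assume u: "u \<in> {v\<in>F. x \<in> disk (P v)}"
  then show "0 < snd (P u) \<and> x \<in> cball (fst (P u)) (snd (P u))"
    using realizes_radius_pos[OF R] \<open>F \<subseteq> V\<close> by (auto simp: disk_def)
  assume "v \<in> {v\<in>F. x \<in> disk (P v)}" "u \<noteq> v"
  with u show "(snd (P u))\<^sup>2 + (snd (P v))\<^sup>2 \<le> (dist (fst (P u)) (fst (P v)))\<^sup>2"
    using \<open>F \<subseteq> V\<close> by (intro realizes_sq_radii_le_sq_dist[OF assms(1) R]) auto
qed

lemma sum_emeasure_le_ply_times_emeasure: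
  assumes "finite F" and "\<forall>v\<in>F. S v \<in> sets M \<and> S v \<subseteq> B" and "B \<in> sets M"
    and "\<forall>x. card {v\<in>F. x \<in> S v} \<le> k"
  shows "(\<Sum>v\<in>F. emeasure M (S v)) \<le> of_nat k * emeasure M B"
proof -
  have "(\<Sum>v\<in>F. emeasure M (S v)) = (\<integral>\<^sup>+x. (\<Sum>v\<in>F. indicator (S v) x) \<partial>M)"
    using assms(2) by (subst nn_integral_sum) auto
  also have "\<dots> \<le> (\<integral>\<^sup>+x. of_nat k * indicator B x \<partial>M)"
  proof (intro nn_integral_mono)
    fix x
    have "(\<Sum>v\<in>F. indicator (S v) x :: ennreal) = of_nat (card {v\<in>F. x \<in> S v})"
      using assms(1) by (simp add: indicator_def sum.If_cases Int_def)
    moreover have "{v\<in>F. x \<in> S v} = {}" if "x \<notin> B" using assms(2) that by blast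
    ultimately show "(\<Sum>v\<in>F. indicator (S v) x) \<le> of_nat k * (indicator B x :: ennreal)"
      using assms(4)[rule_format, of x] by (cases "x \<in> B") auto
  qed
  also have "\<dots> = of_nat k * emeasure M B" using assms(3) by (rule nn_integral_cmult_indicator)
  finally show ?thesis .
qed

lemma emeasure_cball_complex:
  "0 \<le> r \<Longrightarrow> emeasure lborel (cball (c::complex) r) = ennreal (pi * r\<^sup>2)"
  using emeasure_cball[of r c] unit_ball_vol_numeral(1)[of Num.One] by simp

lemma sum_sq_radii_le_if_ply_le:
  fixes c :: "'a \<Rightarrow> complex"
  assumes "finite F" and "\<forall>v\<in>F. 0 \<le> s v \<and> cball (c v) (s v) \<subseteq> cball 0 R" and "0 \<le> R"
    and "\<forall>x. card {v\<in>F. x \<in> cball (c v) (s v)} \<le> k"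
  shows "(\<Sum>v\<in>F. (s v)\<^sup>2) \<le> k * R\<^sup>2"
proof -
  have "ennreal (pi * (\<Sum>v\<in>F. (s v)\<^sup>2)) = (\<Sum>v\<in>F. emeasure lborel (cball (c v) (s v)))"
    using assms(2) by (simp add: emeasure_cball_complex sum_distrib_left sum_ennreal)
  also have "\<dots> \<le> of_nat k * emeasure lborel (cball (0::complex) R)"
    using assms by (intro sum_emeasure_le_ply_times_emeasure) auto
  also have "\<dots> = ennreal (pi * (k * R\<^sup>2))"
    using assms(3) by (simp add: emeasure_cball_complex ennreal_of_nat_eq_real_of_nat
        ennreal_mult'[symmetric] mult.left_commute)
  finally show ?thesis by (simp add: ennreal_le_iff)
qed

lemma cball_in_cball_near_point:
  fixes c z :: "'a::euclidean_space"
  assumes z: "z \<in> cball c \<rho>" and s: "0 \<le> s" "s \<le> \<rho>"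
  obtains c' where "cball c' s \<subseteq> cball c \<rho>" and "cball c' s \<subseteq> cball z (2 * s)"
proof
  define k where "k = s / \<rho>"
  define c' where "c' = z + k *\<^sub>R (c - z)"
  have "0 \<le> \<rho>" using z by (auto intro: order_trans[OF zero_le_dist])
  then have k: "0 \<le> k" "k \<le> 1" "k * \<rho> = s"
    using s by (auto simp: k_def divide_le_eq_1)
  have d: "dist z c \<le> \<rho>" using z by (simp add: dist_commute)
  have "c' - c = (1 - k) *\<^sub>R (z - c)" by (simp add: c'_def algebra_simps)
  then have "dist c' c = (1 - k) * dist z c" using k by (simp only: dist_norm norm_scaleR)
  also have "\<dots> \<le> (1 - k) * \<rho>" using k d by (intro mult_left_mono) auto
  finally show "cball c' s \<subseteq> cball c \<rho>" using k by (simp add: cball_subset_cball_iff algebra_simps)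
  have "dist c' z = k * dist z c" using k by (simp add: c'_def dist_norm norm_minus_commute)
  also have "\<dots> \<le> k * \<rho>" using k d by (intro mult_left_mono) auto
  finally show "cball c' s \<subseteq> cball z (2 * s)" using k by (simp add: cball_subset_cball_iff)
qed

lemma interval_length_le_sum_lengths:
  fixes a b :: "'a \<Rightarrow> real"
  assumes "finite T" and "r1 \<le> r2" and "{r1..r2} \<subseteq> (\<Union>v\<in>T. {a v..b v})"
    and "\<forall>v\<in>T. a v \<le> b v"
  shows "r2 - r1 \<le> (\<Sum>v\<in>T. b v - a v)"
proof -
  have "ennreal (r2 - r1) = emeasure lborel {r1..r2}" using assms(2) by simp
  also have "\<dots> \<le> emeasure lborel (\<Union>v\<in>T. {a v..b v})"
    using assms(1,3) by (intro emeasure_mono) auto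
  also have "\<dots> \<le> (\<Sum>v\<in>T. emeasure lborel {a v..b v})"
    using assms(1) by (intro emeasure_subadditive_finite) auto
  also have "\<dots> = ennreal (\<Sum>v\<in>T. b v - a v)"
    using assms(4) by (simp add: sum_ennreal)
  finally show ?thesis using assms(4) by (simp add: ennreal_le_iff sum_nonneg)
qed

lemma interval_length_le_sum_diameters:
  fixes c :: "'a \<Rightarrow> 'b::real_normed_vector"
  assumes "finite T" and "r1 \<le> r2" and "{r1..r2} \<subseteq> norm ` (\<Union>v\<in>T. cball (c v) (\<rho> v))"
    and "\<forall>v\<in>T. 0 \<le> \<rho> v"
  shows "r2 - r1 \<le> (\<Sum>v\<in>T. 2 * \<rho> v)"
proof -
  have "{r1..r2} \<subseteq> (\<Union>v\<in>T. {norm (c v) - \<rho> v..norm (c v) + \<rho> v})"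
  proof
    fix t assume "t \<in> {r1..r2}"
    then obtain v z where "v \<in> T" "dist (c v) z \<le> \<rho> v" "t = norm z" using assms(3) by auto
    moreover have "\<bar>norm z - norm (c v)\<bar> \<le> dist (c v) z"
      by (metis dist_norm norm_minus_commute norm_triangle_ineq3)
    ultimately have "t \<in> {norm (c v) - \<rho> v..norm (c v) + \<rho> v}" by auto
    with \<open>v \<in> T\<close> show "t \<in> (\<Union>v\<in>T. {norm (c v) - \<rho> v..norm (c v) + \<rho> v})" by blast
  qed
  from interval_length_le_sum_lengths[OF assms(1,2) this] assms(4) show ?thesis by simp
qed

lemma connected_UN_chain:
  assumes "xs \<noteq> []" and "\<forall>i. Suc i < length xs \<longrightarrow> S (xs ! i) \<inter> S (xs ! Suc i) \<noteq> {}"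
    and "\<forall>v\<in>set xs. connected (S v)"
  shows "connected (\<Union>v\<in>set xs. S v)"
  using assms
proof (induction xs rule: induct_list012)
  case (3 x y zs)
  have "\<forall>i. Suc i < length (y # zs) \<longrightarrow> S ((y # zs) ! i) \<inter> S ((y # zs) ! Suc i) \<noteq> {}"
  proof (intro allI impI)
    fix i assume "Suc i < length (y # zs)"
    then show "S ((y # zs) ! i) \<inter> S ((y # zs) ! Suc i) \<noteq> {}"
      using "3.prems"(2)[rule_format, of "Suc i"] by simp
  qed
  then have "connected (\<Union>v\<in>set (y # zs). S v)" using "3.IH"(2) "3.prems"(3) by simp
  moreover have "S x \<inter> S y \<noteq> {}" using "3.prems"(2)[rule_format, of 0] by simp
  ultimately show ?case using "3.prems"(3) by (auto intro: connected_Un)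
qed auto

lemma joining_pathsD:
  assumes "\<gamma> \<in> joining_paths V E A B"
  shows "finite \<gamma>" and "\<gamma> \<subseteq> V" and "\<gamma> \<inter> A \<noteq> {}" and "\<gamma> \<inter> B \<noteq> {}"
  using assms by (auto simp: joining_paths_def)

lemma realizes_joining_path_disks_connected:
  assumes R: "realizes V E \<Theta> P" and "\<gamma> \<in> joining_paths V E A B"
  shows "connected (\<Union>v\<in>\<gamma>. disk (P v))"
proof -
  obtain xs where xs: "\<gamma> = set xs" "xs \<noteq> []" "set xs \<subseteq> V"
    "\<forall>i. Suc i < length xs \<longrightarrow> {xs ! i, xs ! Suc i} \<in> E"
    using assms(2) unfolding joining_paths_def by blast
  have "disk (P (xs ! i)) \<inter> disk (P (xs ! Suc i)) \<noteq> {}" if i: "Suc i < length xs" for i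
  proof (cases "xs ! i = xs ! Suc i")
    case True
    have "xs ! i \<in> V" using i xs(3) by auto
    then have "0 < snd (P (xs ! i))" by (rule realizes_radius_pos[OF R])
    then have "fst (P (xs ! i)) \<in> disk (P (xs ! i))" by (simp add: disk_def)
    then show ?thesis using True by auto
  next
    case False
    have "xs ! i \<in> V" "xs ! Suc i \<in> V" using i xs(3) by auto
    moreover have "{xs ! i, xs ! Suc i} \<in> tilde_E V E \<Theta>" using xs(4) i by (auto simp: tilde_E_def)
    ultimately show ?thesis using R False unfolding realizes_def by blast
  qed
  then show ?thesis
    unfolding xs(1) by (intro connected_UN_chain) (auto simp: xs(2) disk_def)
qed

definition annulus_vertices :: "'v set \<Rightarrow> ('v \<Rightarrow> complex \<times> real) \<Rightarrow> real \<Rightarrow> real \<Rightarrow> 'v set" where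
  "annulus_vertices V P r1 r2 = {v\<in>V. \<exists>z\<in>disk (P v). r1 \<le> norm z \<and> norm z \<le> r2}"

definition annulus_metric :: "'v set \<Rightarrow> ('v \<Rightarrow> complex \<times> real) \<Rightarrow> real \<Rightarrow> real \<Rightarrow> 'v \<Rightarrow> real" where
  "annulus_metric V P r1 r2 v =
     (if v \<in> annulus_vertices V P r1 r2 then min 1 (2 * snd (P v) / (r2 - r1)) else 0)"

lemma annulus_metric_nonneg:
  "r1 < r2 \<Longrightarrow> 0 \<le> snd (P v) \<Longrightarrow> 0 \<le> annulus_metric V P r1 r2 v"
  by (simp add: annulus_metric_def)

lemma realizes_joining_path_covers_radii:
  assumes R: "realizes V E \<Theta> P" and "r1 \<le> r2"
    and \<gamma>: "\<gamma> \<in> joining_paths V E (V_circ V P r1) (V_circ V P r2)"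
  shows "{r1..r2} \<subseteq> norm ` (\<Union>v\<in>\<gamma> \<inter> annulus_vertices V P r1 r2. disk (P v))"
proof
  fix t assume t: "t \<in> {r1..r2}"
  let ?N = "norm ` (\<Union>v\<in>\<gamma>. disk (P v))"
  have "connected ?N"
    using realizes_joining_path_disks_connected[OF R \<gamma>]
    by (rule connected_continuous_image[rotated]) (intro continuous_intros)
  moreover have "r1 \<in> ?N" "r2 \<in> ?N"
    using joining_pathsD(3,4)[OF \<gamma>] unfolding V_circ_def by force+
  ultimately have "t \<in> ?N" using t by (auto simp: connected_iff_interval)
  then obtain v z where "v \<in> \<gamma>" "z \<in> disk (P v)" "t = norm z" by auto
  moreover have "v \<in> V" using joining_pathsD(2)[OF \<gamma>] \<open>v \<in> \<gamma>\<close> by blast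
  ultimately show "t \<in> norm ` (\<Union>v\<in>\<gamma> \<inter> annulus_vertices V P r1 r2. disk (P v))"
    using t by (auto simp: annulus_vertices_def)
qed

lemma min_one_sum_le_sum_min_one:
  fixes f :: "'a \<Rightarrow> real"
  assumes "finite A" and "\<forall>x\<in>A. 0 \<le> f x"
  shows "min 1 (\<Sum>x\<in>A. f x) \<le> (\<Sum>x\<in>A. min 1 (f x))"
  using assms
proof (induction A rule: finite_induct)
  case (insert a A)
  have "0 \<le> (\<Sum>x\<in>A. f x)" using insert.prems by (auto intro: sum_nonneg)
  then have "min 1 (f a + (\<Sum>x\<in>A. f x)) \<le> min 1 (f a) + min 1 (\<Sum>x\<in>A. f x)"
    using insert.prems by auto
  then show ?case using insert by auto
qed simp

lemma annulus_metric_admissible: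
  assumes R: "realizes V E \<Theta> P" and r: "r1 < r2"
    and \<gamma>: "\<gamma> \<in> joining_paths V E (V_circ V P r1) (V_circ V P r2)"
  shows "1 \<le> vm_length (annulus_metric V P r1 r2) \<gamma>"
proof -
  let ?\<eta> = "annulus_metric V P r1 r2" and ?T = "\<gamma> \<inter> annulus_vertices V P r1 r2"
  have fin: "finite \<gamma>" and "\<gamma> \<subseteq> V" using joining_pathsD[OF \<gamma>] by auto
  then have \<rho>: "\<forall>v\<in>\<gamma>. 0 < snd (P v)" using realizes_radius_pos[OF R] by blast
  then have "r2 - r1 \<le> (\<Sum>v\<in>?T. 2 * snd (P v))"
    using realizes_joining_path_covers_radii[OF R _ \<gamma>] r fin
    by (intro interval_length_le_sum_diameters) (auto simp: disk_def)
  then have "1 \<le> min 1 (\<Sum>v\<in>?T. 2 * snd (P v) / (r2 - r1))"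
    using r by (simp add: sum_divide_distrib[symmetric])
  also have "\<dots> \<le> (\<Sum>v\<in>?T. ?\<eta> v)"
    using min_one_sum_le_sum_min_one[of ?T "\<lambda>v. 2 * snd (P v) / (r2 - r1)"] fin \<rho> r
    by (simp add: annulus_metric_def less_imp_le)
  also have "\<dots> \<le> (\<Sum>v\<in>\<gamma>. ?\<eta> v)"
    using fin \<rho> r by (intro sum_mono2) (auto intro: annulus_metric_nonneg less_imp_le)
  finally show ?thesis
    using fin \<rho> r
    by (simp add: vm_length_def sum_ennreal annulus_metric_nonneg less_imp_le ennreal_leI)
qed

lemma annulus_vertices_sum_sq_shrunk_radii_le:
  assumes \<Theta>: "\<forall>e\<in>E. \<Theta> e \<le> pi / 2" and R: "realizes V E \<Theta> P"
    and r: "0 \<le> r1" "r1 < r2" and F: "finite F" "F \<subseteq> V"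
  shows "(\<Sum>v\<in>F \<inter> annulus_vertices V P r1 r2. (min (snd (P v)) ((r2 - r1) / 2))\<^sup>2) \<le> 16 * r2\<^sup>2"
proof -
  let ?A = "F \<inter> annulus_vertices V P r1 r2" and ?s = "\<lambda>v. min (snd (P v)) ((r2 - r1) / 2)"
  have \<rho>: "\<forall>v\<in>F. 0 < snd (P v)" using realizes_radius_pos[OF R] F(2) by blast
  have "\<exists>c'. cball c' (?s v) \<subseteq> disk (P v) \<and> cball c' (?s v) \<subseteq> cball 0 (2 * r2)"
    if v: "v \<in> ?A" for v
  proof -
    obtain z where z: "z \<in> disk (P v)" "norm z \<le> r2"
      using v unfolding annulus_vertices_def by auto
    have "z \<in> cball (fst (P v)) (snd (P v))" "0 \<le> ?s v" "?s v \<le> snd (P v)"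
      using z(1) \<rho> v r by (auto simp: disk_def)
    then obtain c' where "cball c' (?s v) \<subseteq> disk (P v)" "cball c' (?s v) \<subseteq> cball z (2 * ?s v)"
      unfolding disk_def by (rule cball_in_cball_near_point)
    moreover have "cball z (2 * ?s v) \<subseteq> cball 0 (2 * r2)"
      using z(2) r min.cobounded2[of "snd (P v)" "(r2 - r1) / 2"]
      by (auto simp: cball_subset_cball_iff)
    ultimately show ?thesis by blast
  qed
  then obtain c' where c': "\<forall>v\<in>?A. cball (c' v) (?s v) \<subseteq> disk (P v) \<and>
      cball (c' v) (?s v) \<subseteq> cball 0 (2 * r2)"
    by metis
  have "card {v\<in>?A. x \<in> cball (c' v) (?s v)} \<le> 4" for x
  proof -
    have "{v\<in>?A. x \<in> cball (c' v) (?s v)} \<subseteq> {v\<in>F. x \<in> disk (P v)}" using c' by blast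
    then have "card {v\<in>?A. x \<in> cball (c' v) (?s v)} \<le> card {v\<in>F. x \<in> disk (P v)}"
      using F(1) by (intro card_mono) auto
    also have "\<dots> \<le> 4" using realizes_card_disks_containing_le_4[OF \<Theta> R F(2)] .
    finally show ?thesis .
  qed
  then have "(\<Sum>v\<in>?A. (?s v)\<^sup>2) \<le> real 4 * (2 * r2)\<^sup>2"
    using c' F \<rho> r by (intro sum_sq_radii_le_if_ply_le) auto
  then show ?thesis by (simp add: power_mult_distrib)
qed

lemma annulus_metric_sum_sq_le:
  assumes "\<forall>e\<in>E. \<Theta> e \<le> pi / 2" and "realizes V E \<Theta> P"
    and "0 \<le> r1" "r1 < r2" and "finite F" "F \<subseteq> V"
  shows "(\<Sum>v\<in>F. (annulus_metric V P r1 r2 v)\<^sup>2) \<le> 64 * r2\<^sup>2 / (r2 - r1)\<^sup>2"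
proof -
  let ?A = "annulus_vertices V P r1 r2" and ?s = "\<lambda>v. min (snd (P v)) ((r2 - r1) / 2)"
  have "(annulus_metric V P r1 r2 v)\<^sup>2 = (if v \<in> ?A then 4 / (r2 - r1)\<^sup>2 * (?s v)\<^sup>2 else 0)" for v
    using assms(4) by (simp add: annulus_metric_def min_def field_simps power_divide)
  then have "(\<Sum>v\<in>F. (annulus_metric V P r1 r2 v)\<^sup>2) =
      (\<Sum>v\<in>F. if v \<in> ?A then 4 / (r2 - r1)\<^sup>2 * (?s v)\<^sup>2 else 0)"
    by (rule sum.cong[OF refl])
  also have "\<dots> = (\<Sum>v\<in>F \<inter> ?A. 4 / (r2 - r1)\<^sup>2 * (?s v)\<^sup>2)"
    using assms(5) by (rule sum.inter_restrict[symmetric])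
  also have "\<dots> = 4 / (r2 - r1)\<^sup>2 * (\<Sum>v\<in>F \<inter> ?A. (?s v)\<^sup>2)"
    by (rule sum_distrib_left[symmetric])
  also have "\<dots> \<le> 4 / (r2 - r1)\<^sup>2 * (16 * r2\<^sup>2)"
    using annulus_vertices_sum_sq_shrunk_radii_le[OF assms] by (intro mult_left_mono) auto
  finally show ?thesis by simp
qed

lemma ennreal_inverse_antimono:
  fixes x y :: ennreal
  assumes "x \<le> y"
  shows "inverse y \<le> inverse x"
proof (cases x rule: ennreal_cases)
  case (real a)
  show ?thesis
  proof (cases y rule: ennreal_cases)
    case (real b)
    with \<open>x = ennreal a\<close> \<open>0 \<le> a\<close> assms show ?thesis
      by (cases "a = 0")
        (auto simp: inverse_ennreal ennreal_le_iff intro!: ennreal_leI le_imp_inverse_le)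
  qed simp
qed (use assms in \<open>simp add: top_unique\<close>)

lemma VEL_ge_if_admissible_metric:
  assumes "\<forall>v\<in>V. 0 \<le> \<eta> v" and "\<forall>\<gamma>\<in>\<Gamma>. 1 \<le> vm_length \<eta> \<gamma>"
    and "\<forall>F. finite F \<and> F \<subseteq> V \<longrightarrow> (\<Sum>v\<in>F. (\<eta> v)\<^sup>2) \<le> M" and "0 < M"
  shows "ennreal (1 / M) \<le> VEL V \<Gamma>"
proof -
  have "vm_area V \<eta> \<le> ennreal M"
    unfolding vm_area_def
  proof (rule infsum_le_finite_sums)
    show "(\<lambda>v. ennreal ((\<eta> v)\<^sup>2)) summable_on V" by (simp add: nonneg_summable_on_complete)
    fix F assume "finite F" "F \<subseteq> V"
    then show "(\<Sum>v\<in>F. ennreal ((\<eta> v)\<^sup>2)) \<le> ennreal M"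
      using assms(3) by (simp add: sum_ennreal ennreal_leI)
  qed
  moreover have "MOD V \<Gamma> \<le> vm_area V \<eta>"
    unfolding MOD_def using assms(1,2) by (intro INF_lower) auto
  ultimately have "MOD V \<Gamma> \<le> ennreal M" by order
  then have "inverse (ennreal M) \<le> VEL V \<Gamma>"
    unfolding VEL_def by (rule ennreal_inverse_antimono)
  then show ?thesis using assms(4) by (simp add: inverse_ennreal inverse_eq_divide)
qed

lemma VEL_sets_circles_ge:
  assumes "\<forall>e\<in>E. \<Theta> e \<le> pi / 2" and R: "realizes V E \<Theta> P" and r: "0 \<le> r1" "r1 < r2"
  shows "ennreal ((r2 - r1)\<^sup>2 / (64 * r2\<^sup>2)) \<le> VEL_sets V E (V_circ V P r1) (V_circ V P r2)"
proof -
  have "ennreal (1 / (64 * r2\<^sup>2 / (r2 - r1)\<^sup>2)) \<le> VEL_sets V E (V_circ V P r1) (V_circ V P r2)"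
    unfolding VEL_sets_def
  proof (rule VEL_ge_if_admissible_metric)
    show "\<forall>v\<in>V. 0 \<le> annulus_metric V P r1 r2 v"
      using r(2) realizes_radius_pos[OF R] by (auto intro: annulus_metric_nonneg less_imp_le)
    show "\<forall>\<gamma>\<in>joining_paths V E (V_circ V P r1) (V_circ V P r2).
        1 \<le> vm_length (annulus_metric V P r1 r2) \<gamma>"
      using annulus_metric_admissible[OF R r(2)] by blast
    show "\<forall>F. finite F \<and> F \<subseteq> V \<longrightarrow>
        (\<Sum>v\<in>F. (annulus_metric V P r1 r2 v)\<^sup>2) \<le> 64 * r2\<^sup>2 / (r2 - r1)\<^sup>2"
      using annulus_metric_sum_sq_le[OF assms] by blast
    show "0 < 64 * r2\<^sup>2 / (r2 - r1)\<^sup>2" using r by simp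
  qed
  then show ?thesis by simp
qed

lemma sq_diff_div_64_sq_ge:
  fixes r1 r2 :: real
  assumes "0 < r1" and "r1 < r2"
  shows "(r2 - r1)\<^sup>2 / ((32 + (8 * pi)\<^sup>2) * r2\<^sup>2) \<le> (r2 - r1)\<^sup>2 / (64 * r2\<^sup>2)"
    and "2 * r1 \<le> r2 \<Longrightarrow> 1 / (128 + (16 * pi)\<^sup>2) \<le> (r2 - r1)\<^sup>2 / (64 * r2\<^sup>2)"
proof -
  have pi: "1 \<le> pi\<^sup>2" using pi_gt3 by (intro one_le_power) simp
  have "64 * r2\<^sup>2 \<le> (32 + (8 * pi)\<^sup>2) * r2\<^sup>2" using pi by (intro mult_right_mono) auto
  then show "(r2 - r1)\<^sup>2 / ((32 + (8 * pi)\<^sup>2) * r2\<^sup>2) \<le> (r2 - r1)\<^sup>2 / (64 * r2\<^sup>2)"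
    using assms by (intro divide_left_mono) (auto intro!: mult_pos_pos)
  assume "2 * r1 \<le> r2"
  then have "r2\<^sup>2 \<le> (2 * (r2 - r1))\<^sup>2" using assms by (intro power_mono) auto
  also have "\<dots> = 4 * (r2 - r1)\<^sup>2" by (simp add: power2_eq_square algebra_simps)
  finally have "1 / 256 \<le> (r2 - r1)\<^sup>2 / (64 * r2\<^sup>2)"
    using assms by (simp add: le_divide_eq)
  moreover have "1 / (128 + (16 * pi)\<^sup>2) \<le> 1 / 256"
    using pi by (intro divide_left_mono) (auto simp: power_mult_distrib)
  ultimately show "1 / (128 + (16 * pi)\<^sup>2) \<le> (r2 - r1)\<^sup>2 / (64 * r2\<^sup>2)" by linarith
qed

theorem lemma5p3:
  fixes V :: "'v set" and E :: "'v set set" and \<Theta> :: "'v set \<Rightarrow> real"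
    and P :: "'v \<Rightarrow> complex \<times> real" and r1 r2 :: real
  assumes "graph V E"
    and "\<forall>e\<in>E. 0 \<le> \<Theta> e \<and> \<Theta> e \<le> pi / 2"
    and "realizes V E \<Theta> P"
    and "0 < r1" and "r1 < r2"
  shows "VEL_sets V E (V_circ V P r1) (V_circ V P r2)
           \<ge> ennreal ((r2 - r1)\<^sup>2 / ((32 + (8 * pi)\<^sup>2) * r2\<^sup>2))
       \<and> (2 * r1 \<le> r2 \<longrightarrow>
           VEL_sets V E (V_circ V P r1) (V_circ V P r2) \<ge> ennreal (1 / (128 + (16 * pi)\<^sup>2)))"
proof -
  have "\<forall>e\<in>E. \<Theta> e \<le> pi / 2" using assms(2) by blast
  then have "ennreal ((r2 - r1)\<^sup>2 / (64 * r2\<^sup>2)) \<le> VEL_sets V E (V_circ V P r1) (V_circ V P r2)"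
    using assms(3-5) by (intro VEL_sets_circles_ge) auto
  then show ?thesis
    using sq_diff_div_64_sq_ge[OF assms(4,5)] by (auto intro: order_trans[OF ennreal_leI])
qed

end
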